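(* Let $\mathcal{A}$ be a finite-dimensional prebialgebra over $\mathbb{C}$ (unit $1_{\mathcal{A}}$, comultiplication $\Delta$, counit $\epsilon$), $\rho:\mathcal{A}\to M_{d_\rho}(\mathbb{C})$ a representation and $(v_{ij})_{1\le i,j\le d_v}$ a corepresentation. With a basis $B(\mathcal{A})$ and dual basis $\delta_x$, define $U^{ab}_{ij}=\rho_{ab}(v_{ij})$, $R^{yx}_{ab}=(\delta_y\otimes\rho_{ab})(\Delta(x))$, $V^{yx}_{ij}=\delta_y(xv_{ij})$, $u_x=\delta_x(1_{\mathcal{A}})$, $e_x=\epsilon(x)$. For $n\ge1$ define $$M_n(a_1,i_1,\dots,a_n,i_n;b_1,j_1,\dots,b_n,j_n)=\sum_{x_0,\dots,x_{2n}\in B(\mathcal{A})}e_{x_0}\prod_{m=1}^{n}\Big(R^{x_{2m-2}x_{2m-1}}_{a_mb_m}V^{x_{2m-1}x_{2m}}_{i_mj_m}\Big)u_{x_{2n}},$$ and define $T_n$ recursively by $T_1(a_1,i_1;b_1,j_1)=U^{a_1b_1}_{i_1j_1}$ and, for $n\ge2$, $$T_n(a_1,i_1,\dots,a_n,i_n;b_1,j_1,\dots,b_n,j_n)=\sum_{c_1,\dots,c_{n-1}}\sum_{k_2,\dots,k_n}T_{n-1}(a_1,i_2,a_2,i_3,\dots,a_{n-1},i_n;c_1,k_2,\dots,c_{n-1},k_n)\prod_{m=1}^nU^{c_mb_m}_{k_mj_m}$$ with $k_1:=i_1$, $c_n:=a_n$. Then $M_n=T_n$ for all $n\ge1$.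
   Context: A prebialgebra is a unital associative algebra and a coassociative counital coalgebra ($(\Delta\otimes\mathrm{id})\Delta=(\mathrm{id}\otimes\Delta)\Delta$, $(\epsilon\otimes\mathrm{id})\Delta=(\mathrm{id}\otimes\epsilon)\Delta=\mathrm{id}$) such that $\Delta(xy)=\Delta(x)\Delta(y)$; no compatibility of $\Delta$ with the unit or of $\epsilon$ with multiplication is assumed. A representation is a unital algebra homomorphism $\rho:\mathcal{A}\to M_{d_\rho}(\mathbb{C})$; a corepresentation is a matrix $(v_{ij})$ of elements of $\mathcal{A}$ with $\Delta(v_{ij})=\sum_kv_{ik}\otimes v_{kj}$ and $\epsilon(v_{ij})=\delta_{ij}$. $T_n$ is the contraction of a triangular brickwork network of $n(n+1)/2$ copies of $U$. *)

theory Defs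
  imports Complex_Main "HOL-Library.FuncSet"
begin

text \<open>
  A basis B(A) is indexed by {..<N}; an element of A is identified with its coordinate
  vector.  The structure is given by
    mu x y z  = delta_z(x y)               (multiplication)
    one z     = delta_z(1_A)                (unit)
    cop x y z = (delta_y (x) delta_z)(Delta x)  (comultiplication)
    eps x     = epsilon(x)                  (counit)
  All maps are extended linearly from the basis.
\<close>

definition prebialgebra ::
  "nat \<Rightarrow> (nat \<Rightarrow> nat \<Rightarrow> nat \<Rightarrow> complex) \<Rightarrow> (nat \<Rightarrow> complex)
   \<Rightarrow> (nat \<Rightarrow> nat \<Rightarrow> nat \<Rightarrow> complex) \<Rightarrow> (nat \<Rightarrow> complex) \<Rightarrow> bool" where
  "prebialgebra N mu one cop eps \<longleftrightarrow>
     \<comment> \<open>associativity: (xy)z = x(yz)\<close>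
     (\<forall>x<N. \<forall>y<N. \<forall>z<N. \<forall>w<N.
        (\<Sum>k<N. mu x y k * mu k z w) = (\<Sum>k<N. mu y z k * mu x k w)) \<and>
     \<comment> \<open>unit: 1 x = x = x 1\<close>
     (\<forall>x<N. \<forall>w<N. (\<Sum>k<N. one k * mu k x w) = (if x = w then 1 else 0)) \<and>
     (\<forall>x<N. \<forall>w<N. (\<Sum>k<N. one k * mu x k w) = (if x = w then 1 else 0)) \<and>
     \<comment> \<open>coassociativity\<close>
     (\<forall>x<N. \<forall>a<N. \<forall>b<N. \<forall>c<N.
        (\<Sum>k<N. cop x k c * cop k a b) = (\<Sum>k<N. cop x a k * cop k b c)) \<and>
     \<comment> \<open>counit\<close>
     (\<forall>x<N. \<forall>b<N. (\<Sum>k<N. eps k * cop x k b) = (if x = b then 1 else 0)) \<and>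
     (\<forall>x<N. \<forall>a<N. (\<Sum>k<N. cop x a k * eps k) = (if x = a then 1 else 0)) \<and>
     \<comment> \<open>Delta(xy) = Delta(x) Delta(y)\<close>
     (\<forall>x<N. \<forall>y<N. \<forall>a<N. \<forall>b<N.
        (\<Sum>k<N. mu x y k * cop k a b) =
        (\<Sum>a1<N. \<Sum>b1<N. \<Sum>a2<N. \<Sum>b2<N.
            cop x a1 b1 * cop y a2 b2 * mu a1 a2 a * mu b1 b2 b))"

text \<open>A representation: rho x a b = rho_ab(basis element x), a unital algebra
  homomorphism into d x d complex matrices (indices < d).\<close>

definition representation ::
  "nat \<Rightarrow> (nat \<Rightarrow> nat \<Rightarrow> nat \<Rightarrow> complex) \<Rightarrow> (nat \<Rightarrow> complex)
   \<Rightarrow> nat \<Rightarrow> (nat \<Rightarrow> nat \<Rightarrow> nat \<Rightarrow> complex) \<Rightarrow> bool" where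
  "representation N mu one d rho \<longleftrightarrow>
     (\<forall>x<N. \<forall>y<N. \<forall>a<d. \<forall>b<d.
        (\<Sum>k<N. mu x y k * rho k a b) = (\<Sum>c<d. rho x a c * rho y c b)) \<and>
     (\<forall>a<d. \<forall>b<d. (\<Sum>k<N. one k * rho k a b) = (if a = b then 1 else 0))"

text \<open>A corepresentation: v i j x = delta_x(v_ij), indices i, j < dv.\<close>

definition corepresentation ::
  "nat \<Rightarrow> (nat \<Rightarrow> nat \<Rightarrow> nat \<Rightarrow> complex) \<Rightarrow> (nat \<Rightarrow> complex)
   \<Rightarrow> nat \<Rightarrow> (nat \<Rightarrow> nat \<Rightarrow> nat \<Rightarrow> complex) \<Rightarrow> bool" where
  "corepresentation N cop eps dv v \<longleftrightarrow>
     (\<forall>i<dv. \<forall>j<dv. \<forall>a<N. \<forall>b<N.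
        (\<Sum>x<N. v i j x * cop x a b) = (\<Sum>k<dv. v i k a * v k j b)) \<and>
     (\<forall>i<dv. \<forall>j<dv. (\<Sum>x<N. v i j x * eps x) = (if i = j then 1 else 0))"

definition Ucoef :: "nat \<Rightarrow> (nat \<Rightarrow> nat \<Rightarrow> nat \<Rightarrow> complex) \<Rightarrow> (nat \<Rightarrow> nat \<Rightarrow> nat \<Rightarrow> complex)
   \<Rightarrow> nat \<Rightarrow> nat \<Rightarrow> nat \<Rightarrow> nat \<Rightarrow> complex" where
  "Ucoef N rho v a b i j = (\<Sum>x<N. v i j x * rho x a b)"

definition Rcoef :: "nat \<Rightarrow> (nat \<Rightarrow> nat \<Rightarrow> nat \<Rightarrow> complex) \<Rightarrow> (nat \<Rightarrow> nat \<Rightarrow> nat \<Rightarrow> complex)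
   \<Rightarrow> nat \<Rightarrow> nat \<Rightarrow> nat \<Rightarrow> nat \<Rightarrow> complex" where
  "Rcoef N cop rho y x a b = (\<Sum>z<N. cop x y z * rho z a b)"

definition Vcoef :: "nat \<Rightarrow> (nat \<Rightarrow> nat \<Rightarrow> nat \<Rightarrow> complex) \<Rightarrow> (nat \<Rightarrow> nat \<Rightarrow> nat \<Rightarrow> complex)
   \<Rightarrow> nat \<Rightarrow> nat \<Rightarrow> nat \<Rightarrow> nat \<Rightarrow> complex" where
  "Vcoef N mu v y x i j = (\<Sum>z<N. v i j z * mu x z y)"

text \<open>M_n; the index lists as, is, bs, js hold a_1..a_n etc. (0-based list positions),
  and the basis indices x_0..x_{2n} form a function on {0..2n}.\<close>
definition Mn :: "nat \<Rightarrow> (nat \<Rightarrow> nat \<Rightarrow> nat \<Rightarrow> nat \<Rightarrow> complex) \<Rightarrow> (nat \<Rightarrow> nat \<Rightarrow> nat \<Rightarrow> nat \<Rightarrow> complex)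
   \<Rightarrow> (nat \<Rightarrow> complex) \<Rightarrow> (nat \<Rightarrow> complex) \<Rightarrow> nat
   \<Rightarrow> nat list \<Rightarrow> nat list \<Rightarrow> nat list \<Rightarrow> nat list \<Rightarrow> complex" where
  "Mn N R V e u n as is bs js =
     (\<Sum>xs \<in> {0..2*n} \<rightarrow>\<^sub>E {..<N}.
        e (xs 0) *
        (\<Prod>m\<in>{1..n}. R (xs (2*m-2)) (xs (2*m-1)) (as!(m-1)) (bs!(m-1))
                      * V (xs (2*m-1)) (xs (2*m)) (is!(m-1)) (js!(m-1)))
        * u (xs (2*n)))"

definition idx_lists :: "nat \<Rightarrow> nat \<Rightarrow> nat list set" where
  "idx_lists n d = {xs. length xs = n \<and> set xs \<subseteq> {..<d}}"

text \<open>T_n, recursively; Tn U d dv n as is bs js.  With k_1 := i_1, c_n := a_n.\<close>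
fun Tn :: "(nat \<Rightarrow> nat \<Rightarrow> nat \<Rightarrow> nat \<Rightarrow> complex) \<Rightarrow> nat \<Rightarrow> nat \<Rightarrow> nat
   \<Rightarrow> nat list \<Rightarrow> nat list \<Rightarrow> nat list \<Rightarrow> nat list \<Rightarrow> complex" where
  "Tn U d dv 0 as is bs js = 1"
| "Tn U d dv (Suc 0) as is bs js = U (as!0) (bs!0) (is!0) (js!0)"
| "Tn U d dv (Suc (Suc n)) as is bs js =
     (\<Sum>cs \<in> idx_lists (Suc n) d. \<Sum>ks \<in> idx_lists (Suc n) dv.
        Tn U d dv (Suc n) (butlast as) (tl is) cs ks *
        (\<Prod>m<Suc (Suc n). U ((cs @ [last as])!m) (bs!m) ((hd is # ks)!m) (js!m)))"

end

theory Submission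
  imports Defs
begin

(*
  Let R_op a b = (id (x) rho_ab) o Delta, an endomorphism of the prebialgebra.  In the basis,
  R^{ab} and V^{ij} are the matrices of R_op a b and of right multiplication by v_ij, so M_n is
  the counit of the element
      chain = R_op a_1 b_1 ( R_op a_2 b_2 ( ... R_op a_n b_n (1 v_{i_n j_n}) ... ) v_{i_1 j_1} ).
  Since Delta and rho are multiplicative and v is a corepresentation,
      R_op a b (x v_ij) = sum_{c,k} U^{cb}_{kj} (R_op a c x) v_ik,
  so a factor v can be pulled out of R_op at the price of one gate U.  Pulling the factors out of
  the chain row by row yields, at the level of elements, the brickwork recursion defining T_n.
  The counit then only needs epsilon o R_op a b = rho_ab and rho_ab(x v_ij) = sum_c rho_ac(x)
  U^{cb}_{ij}; no compatibility of Delta with the unit or of epsilon with multiplication is used.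
*)

lemma sum_rotate:
  "(\<Sum>x\<in>A. \<Sum>y\<in>B. \<Sum>z\<in>C. F x y z) = (\<Sum>y\<in>B. \<Sum>z\<in>C. \<Sum>x\<in>A. F x y z)"
  by (subst sum.swap, rule sum.cong[OF refl], rule sum.swap)

lemma sum_PiE_insert:
  assumes "x \<notin> S"
  shows "(\<Sum>f\<in>PiE (insert x S) T. F f) = (\<Sum>y\<in>T x. \<Sum>g\<in>PiE S T. F (g(x := y)))"
proof -
  have "(\<Sum>f\<in>PiE (insert x S) T. F f) = (\<Sum>p\<in>T x \<times> PiE S T. F ((\<lambda>(y, g). g(x := y)) p))"
    by (subst PiE_insert_eq, subst sum.reindex[OF inj_combinator[OF assms]]) simp
  also have "\<dots> = (\<Sum>y\<in>T x. \<Sum>g\<in>PiE S T. F (g(x := y)))"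
    by (simp add: sum.cartesian_product case_prod_unfold)
  finally show ?thesis .
qed

definition matvec :: "nat \<Rightarrow> (nat \<Rightarrow> nat \<Rightarrow> complex) \<Rightarrow> (nat \<Rightarrow> complex) \<Rightarrow> nat \<Rightarrow> complex" where
  "matvec N K f = (\<lambda>y. \<Sum>x<N. K y x * f x)"

lemma matvec_cong: "(\<And>x. x < N \<Longrightarrow> f x = g x) \<Longrightarrow> matvec N K f = matvec N K g"
  unfolding matvec_def by simp

lemma matvec_sum: "matvec N K (\<lambda>x. \<Sum>s\<in>S. g s x) = (\<lambda>y. \<Sum>s\<in>S. matvec N K (g s) y)"
  unfolding matvec_def by (simp add: sum_distrib_left sum.swap[of _ S])

lemma matvec_scale: "matvec N K (\<lambda>x. c * g x) = (\<lambda>y. c * matvec N K g y)"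
  unfolding matvec_def by (simp add: sum_distrib_left mult.left_commute)

lemma sum_matvec: "(\<Sum>y<N. e y * matvec N K f y) = (\<Sum>x<N. (\<Sum>y<N. e y * K y x) * f x)"
  unfolding matvec_def
  by (simp only: sum_distrib_left sum_distrib_right, rule trans[OF sum.swap], simp add: mult_ac)

definition vec_mult :: "nat \<Rightarrow> (nat \<Rightarrow> nat \<Rightarrow> nat \<Rightarrow> complex) \<Rightarrow> (nat \<Rightarrow> complex) \<Rightarrow> (nat \<Rightarrow> complex)
    \<Rightarrow> nat \<Rightarrow> complex" where
  "vec_mult N mu f g = (\<lambda>z. \<Sum>x<N. \<Sum>y<N. f x * g y * mu x y z)"

lemma vec_mult_cong:
  "(\<And>x. x < N \<Longrightarrow> f x = f' x) \<Longrightarrow> (\<And>y. y < N \<Longrightarrow> g y = g' y) \<Longrightarrow>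
   vec_mult N mu f g = vec_mult N mu f' g'"
  unfolding vec_mult_def by simp

lemma vec_mult_sum_left:
  "vec_mult N mu (\<lambda>x. \<Sum>s\<in>S. g s x) h = (\<lambda>z. \<Sum>s\<in>S. vec_mult N mu (g s) h z)"
proof
  fix z
  have "vec_mult N mu (\<lambda>x. \<Sum>s\<in>S. g s x) h z = (\<Sum>x<N. \<Sum>y<N. \<Sum>s\<in>S. g s x * h y * mu x y z)"
    unfolding vec_mult_def by (simp add: sum_distrib_right)
  also have "\<dots> = (\<Sum>s\<in>S. vec_mult N mu (g s) h z)"
    unfolding vec_mult_def by (rule sum_rotate[symmetric])
  finally show "vec_mult N mu (\<lambda>x. \<Sum>s\<in>S. g s x) h z = (\<Sum>s\<in>S. vec_mult N mu (g s) h z)" .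
qed

lemma vec_mult_scale_left: "vec_mult N mu (\<lambda>x. c * g x) h = (\<lambda>z. c * vec_mult N mu g h z)"
  unfolding vec_mult_def by (simp add: sum_distrib_left mult_ac)

lemma vec_mult_sum_right:
  "vec_mult N mu h (\<lambda>y. \<Sum>s\<in>S. g s y) = (\<lambda>z. \<Sum>s\<in>S. vec_mult N mu h (g s) z)"
proof
  fix z
  have "vec_mult N mu h (\<lambda>y. \<Sum>s\<in>S. g s y) z = (\<Sum>x<N. \<Sum>y<N. \<Sum>s\<in>S. h x * g s y * mu x y z)"
    unfolding vec_mult_def by (simp add: sum_distrib_left sum_distrib_right)
  also have "\<dots> = (\<Sum>s\<in>S. vec_mult N mu h (g s) z)"
    unfolding vec_mult_def by (rule sum_rotate[symmetric])
  finally show "vec_mult N mu h (\<lambda>y. \<Sum>s\<in>S. g s y) z = (\<Sum>s\<in>S. vec_mult N mu h (g s) z)" .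
qed

lemma vec_mult_scale_right: "vec_mult N mu h (\<lambda>y. c * g y) = (\<lambda>z. c * vec_mult N mu h g z)"
  unfolding vec_mult_def by (simp add: sum_distrib_left mult_ac)

lemma sum_vec_mult:
  "(\<Sum>k<N. K k * vec_mult N mu f g k) = (\<Sum>x1<N. \<Sum>x2<N. f x1 * g x2 * (\<Sum>k<N. mu x1 x2 k * K k))"
  unfolding vec_mult_def
  by (simp only: sum_distrib_left sum_distrib_right,
      (rule trans[OF sum.swap], rule sum.cong[OF refl])+, simp add: mult_ac)

lemma vec_mult_matvec:
  "vec_mult N mu (matvec N K1 f) (matvec N K2 g) y =
   (\<Sum>x1<N. \<Sum>x2<N. f x1 * g x2 * (\<Sum>a1<N. \<Sum>a2<N. K1 a1 x1 * K2 a2 x2 * mu a1 a2 y))"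
proof -
  have "vec_mult N mu (matvec N K1 f) (matvec N K2 g) y =
    (\<Sum>a1<N. \<Sum>a2<N. \<Sum>x1<N. \<Sum>x2<N. f x1 * g x2 * (K1 a1 x1 * K2 a2 x2 * mu a1 a2 y))"
    unfolding vec_mult_def matvec_def sum_product by (simp add: sum_distrib_left sum_distrib_right mult_ac)
  also have "\<dots> = (\<Sum>a1<N. \<Sum>x1<N. \<Sum>x2<N. \<Sum>a2<N. f x1 * g x2 * (K1 a1 x1 * K2 a2 x2 * mu a1 a2 y))"
    by (rule sum.cong[OF refl], rule sum_rotate)
  also have "\<dots> = (\<Sum>x1<N. \<Sum>x2<N. f x1 * g x2 * (\<Sum>a1<N. \<Sum>a2<N. K1 a1 x1 * K2 a2 x2 * mu a1 a2 y))"
    by (subst sum_rotate) (simp add: sum_distrib_left)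
  finally show ?thesis .
qed

lemma matvec_Vcoef [simp]: "matvec N (\<lambda>y x. Vcoef N mu v y x i j) f = vec_mult N mu f (v i j)"
  unfolding matvec_def vec_mult_def Vcoef_def
  by (simp add: sum_distrib_left sum_distrib_right mult_ac)

section \<open>The contraction \<open>M\<^sub>n\<close> as an iterated matrix-vector product\<close>

fun chain_vec :: "nat \<Rightarrow> (nat \<Rightarrow> nat \<Rightarrow> nat \<Rightarrow> nat \<Rightarrow> complex) \<Rightarrow> (nat \<Rightarrow> nat \<Rightarrow> nat \<Rightarrow> nat \<Rightarrow> complex)
    \<Rightarrow> nat list \<Rightarrow> nat list \<Rightarrow> nat list \<Rightarrow> nat list \<Rightarrow> (nat \<Rightarrow> complex) \<Rightarrow> nat \<Rightarrow> complex" where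
  "chain_vec N R V (a # as) (i # is) (b # bs) (j # js) u =
     matvec N (\<lambda>y x. R y x a b) (matvec N (\<lambda>y x. V y x i j) (chain_vec N R V as is bs js u))"
| "chain_vec N R V _ _ _ _ u = u"

lemma chain_vec_snoc:
  "length as = length is \<Longrightarrow> length is = length bs \<Longrightarrow> length bs = length js \<Longrightarrow>
   chain_vec N R V (as @ [a]) (is @ [i]) (bs @ [b]) (js @ [j]) u =
   chain_vec N R V as is bs js (matvec N (\<lambda>y x. R y x a b) (matvec N (\<lambda>y x. V y x i j) u))"
  by (induction as "is" bs js rule: list_induct4) auto

lemma Mn_Suc:
  "Mn N R V e u (Suc n) as is bs js =
   Mn N R V e (matvec N (\<lambda>y x. R y x (as!n) (bs!n)) (matvec N (\<lambda>y x. V y x (is!n) (js!n)) u)) n as is bs js"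
proof -
  define A where "A g = e (g 0) * (\<Prod>m\<in>{1..n}. R (g (2*m-2)) (g (2*m-1)) (as!(m-1)) (bs!(m-1))
                      * V (g (2*m-1)) (g (2*m)) (is!(m-1)) (js!(m-1)))" for g :: "nat \<Rightarrow> nat"
  have dom: "{0..2 * Suc n} = insert (2*n+1) (insert (2*n+2) {0..2*n})"
    and fresh: "2*n+1 \<notin> insert (2*n+2) {0..2*n}" "2*n+2 \<notin> {0..2*n}"
    by auto
  have "Mn N R V e u (Suc n) as is bs js =
     (\<Sum>y1<N. \<Sum>y2<N. \<Sum>g\<in>{0..2*n} \<rightarrow>\<^sub>E {..<N}. A g * (R (g (2*n)) y1 (as!n) (bs!n) * V y1 y2 (is!n) (js!n)) * u y2)"
    unfolding Mn_def dom sum_PiE_insert[OF fresh(1)] sum_PiE_insert[OF fresh(2)]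
  proof (intro sum.cong refl)
    fix y1 y2 :: nat and g :: "nat \<Rightarrow> nat"
    let ?f = "g(2*n+2 := y2, 2*n+1 := y1)"
    have "(\<Prod>m\<in>{1..n}. R (?f (2*m-2)) (?f (2*m-1)) (as!(m-1)) (bs!(m-1))
                      * V (?f (2*m-1)) (?f (2*m)) (is!(m-1)) (js!(m-1))) =
          (\<Prod>m\<in>{1..n}. R (g (2*m-2)) (g (2*m-1)) (as!(m-1)) (bs!(m-1))
                      * V (g (2*m-1)) (g (2*m)) (is!(m-1)) (js!(m-1)))"
      by (rule prod.cong) auto
    then show "e (?f 0) * (\<Prod>m\<in>{1..Suc n}. R (?f (2*m-2)) (?f (2*m-1)) (as!(m-1)) (bs!(m-1))
                      * V (?f (2*m-1)) (?f (2*m)) (is!(m-1)) (js!(m-1))) * u (?f (2 * Suc n)) =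
          A g * (R (g (2*n)) y1 (as!n) (bs!n) * V y1 y2 (is!n) (js!n)) * u y2"
      unfolding prod.nat_ivl_Suc'[of 1 n] by (simp add: A_def mult_ac)
  qed
  also have "\<dots> = (\<Sum>g\<in>{0..2*n} \<rightarrow>\<^sub>E {..<N}. \<Sum>y1<N. \<Sum>y2<N. A g * (R (g (2*n)) y1 (as!n) (bs!n) * V y1 y2 (is!n) (js!n)) * u y2)"
    by (rule sum_rotate[symmetric])
  also have "\<dots> = Mn N R V e (matvec N (\<lambda>y x. R y x (as!n) (bs!n)) (matvec N (\<lambda>y x. V y x (is!n) (js!n)) u)) n as is bs js"
    unfolding Mn_def matvec_def A_def by (simp add: sum_distrib_left sum_distrib_right mult_ac)
  finally show ?thesis .
qed

lemma Mn_cong: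
  assumes "\<And>k. k < n \<Longrightarrow> as!k = as'!k" "\<And>k. k < n \<Longrightarrow> is!k = is'!k"
    "\<And>k. k < n \<Longrightarrow> bs!k = bs'!k" "\<And>k. k < n \<Longrightarrow> js!k = js'!k"
  shows "Mn N R V e u n as is bs js = Mn N R V e u n as' is' bs' js'"
  unfolding Mn_def by (intro sum.cong refl arg_cong2[where f="(*)"] prod.cong) (auto simp: assms)

lemma Mn_eq_chain_vec:
  "length as = n \<Longrightarrow> length is = n \<Longrightarrow> length bs = n \<Longrightarrow> length js = n \<Longrightarrow>
   Mn N R V e u n as is bs js = (\<Sum>x<N. e x * chain_vec N R V as is bs js u x)"
proof (induction n arbitrary: as "is" bs js u)
  case 0
  then show ?case
    unfolding Mn_def by (simp add: sum_PiE_insert[where S="{}", simplified])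
next
  case (Suc n)
  obtain as' a is' i bs' b js' j
    where snoc: "as = as' @ [a]" "is = is' @ [i]" "bs = bs' @ [b]" "js = js' @ [j]"
    using Suc.prems unfolding length_Suc_conv_rev by blast
  have len: "length as' = n" "length is' = n" "length bs' = n" "length js' = n"
    using Suc.prems snoc by auto
  have "Mn N R V e u (Suc n) as is bs js =
     Mn N R V e (matvec N (\<lambda>y x. R y x a b) (matvec N (\<lambda>y x. V y x i j) u)) n as' is' bs' js'"
  proof -
    have last: "as ! n = a" "is ! n = i" "bs ! n = b" "js ! n = j"
      using len snoc by (simp_all add: nth_append)
    show ?thesis
      unfolding Mn_Suc last using len snoc by (intro Mn_cong) (auto simp: nth_append)
  qed
  also have "\<dots> = (\<Sum>x<N. e x * chain_vec N R V as is bs js u x)"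
    using Suc.IH[OF len] len by (simp add: snoc chain_vec_snoc)
  finally show ?case .
qed

lemma idx_lists_0: "idx_lists 0 d = {[]}"
  unfolding idx_lists_def by auto

lemma idx_listsD: "ks \<in> idx_lists n d \<Longrightarrow> length ks = n \<and> set ks \<subseteq> {..<d}"
  unfolding idx_lists_def by auto

lemma sum_idx_lists_Suc: "(\<Sum>ks\<in>idx_lists (Suc n) d. F ks) = (\<Sum>k<d. \<Sum>ks\<in>idx_lists n d. F (k # ks))"
proof -
  have "idx_lists (Suc n) d = (\<lambda>(k, ks). k # ks) ` ({..<d} \<times> idx_lists n d)"
    unfolding idx_lists_def by (auto simp: length_Suc_conv image_iff)
  moreover have "inj_on (\<lambda>(k, ks). k # ks) ({..<d} \<times> idx_lists n d)"
    by (auto simp: inj_on_def)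
  ultimately show ?thesis
    by (simp add: sum.reindex sum.cartesian_product case_prod_unfold)
qed

definition gate_row :: "(nat \<Rightarrow> nat \<Rightarrow> nat \<Rightarrow> nat \<Rightarrow> complex) \<Rightarrow> nat list \<Rightarrow> nat list \<Rightarrow> nat list
    \<Rightarrow> nat list \<Rightarrow> nat list \<Rightarrow> complex" where
  "gate_row U as bs js cs ks = (\<Prod>m<length bs. U ((cs @ [last as]) ! m) (bs ! m) (ks ! m) (js ! m))"

lemma gate_row_Cons:
  "as \<noteq> [] \<Longrightarrow> gate_row U (a # as) (b # bs) (j # js) (c # cs) (k # ks) = U c b k j * gate_row U as bs js cs ks"
  unfolding gate_row_def length_Cons prod.lessThan_Suc_shift by simp

section \<open>Representations and corepresentations of a prebialgebra\<close>

locale prebialgebra_rep_corep =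
  fixes N d dv :: nat
    and mu cop :: "nat \<Rightarrow> nat \<Rightarrow> nat \<Rightarrow> complex"
    and one eps :: "nat \<Rightarrow> complex"
    and rho v :: "nat \<Rightarrow> nat \<Rightarrow> nat \<Rightarrow> complex"
  assumes prebialgebra: "prebialgebra N mu one cop eps"
    and representation: "representation N mu one d rho"
    and corepresentation: "corepresentation N cop eps dv v"
begin

abbreviation mult :: "(nat \<Rightarrow> complex) \<Rightarrow> (nat \<Rightarrow> complex) \<Rightarrow> nat \<Rightarrow> complex" where
  "mult \<equiv> vec_mult N mu"

abbreviation R_op :: "nat \<Rightarrow> nat \<Rightarrow> (nat \<Rightarrow> complex) \<Rightarrow> nat \<Rightarrow> complex" where
  "R_op a b \<equiv> matvec N (\<lambda>y x. Rcoef N cop rho y x a b)"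

abbreviation U :: "nat \<Rightarrow> nat \<Rightarrow> nat \<Rightarrow> nat \<Rightarrow> complex" where
  "U \<equiv> Ucoef N rho v"

lemma unit_left: "x < N \<Longrightarrow> w < N \<Longrightarrow> (\<Sum>k<N. one k * mu k x w) = (if x = w then 1 else 0)"
  using prebialgebra unfolding prebialgebra_def by auto

lemma counit_left: "x < N \<Longrightarrow> z < N \<Longrightarrow> (\<Sum>k<N. eps k * cop x k z) = (if x = z then 1 else 0)"
  using prebialgebra unfolding prebialgebra_def by auto

lemma comult_mult:
  assumes "x < N" "y < N" "a < N" "b < N"
  shows "(\<Sum>k<N. mu x y k * cop k a b) =
    (\<Sum>a1<N. \<Sum>a2<N. \<Sum>b1<N. \<Sum>b2<N. cop x a1 b1 * cop y a2 b2 * mu a1 a2 a * mu b1 b2 b)"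
proof -
  have "(\<Sum>k<N. mu x y k * cop k a b) =
    (\<Sum>a1<N. \<Sum>b1<N. \<Sum>a2<N. \<Sum>b2<N. cop x a1 b1 * cop y a2 b2 * mu a1 a2 a * mu b1 b2 b)"
    using prebialgebra assms unfolding prebialgebra_def by auto
  also have "\<dots> =
    (\<Sum>a1<N. \<Sum>a2<N. \<Sum>b1<N. \<Sum>b2<N. cop x a1 b1 * cop y a2 b2 * mu a1 a2 a * mu b1 b2 b)"
    by (rule sum.cong[OF refl], rule sum.swap)
  finally show ?thesis .
qed

lemma rho_mult:
  "x < N \<Longrightarrow> y < N \<Longrightarrow> a < d \<Longrightarrow> b < d \<Longrightarrow>
   (\<Sum>k<N. mu x y k * rho k a b) = (\<Sum>c<d. rho x a c * rho y c b)"
  using representation unfolding representation_def by auto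

lemma rho_one: "a < d \<Longrightarrow> b < d \<Longrightarrow> (\<Sum>k<N. one k * rho k a b) = (if a = b then 1 else 0)"
  using representation unfolding representation_def by auto

lemma v_comult:
  "i < dv \<Longrightarrow> j < dv \<Longrightarrow> a < N \<Longrightarrow> b < N \<Longrightarrow>
   (\<Sum>x<N. v i j x * cop x a b) = (\<Sum>k<dv. v i k a * v k j b)"
  using corepresentation unfolding corepresentation_def by auto

lemma counit_Rcoef:
  assumes "x < N"
  shows "(\<Sum>y<N. eps y * Rcoef N cop rho y x a b) = rho x a b"
proof -
  have "(\<Sum>y<N. eps y * Rcoef N cop rho y x a b) = (\<Sum>z<N. rho z a b * (\<Sum>y<N. eps y * cop x y z))"
    unfolding Rcoef_def by (simp only: sum_distrib_left sum_distrib_right, rule trans[OF sum.swap], simp add: mult_ac)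
  also have "\<dots> = rho x a b"
    using assms by (simp add: counit_left if_distrib cong: if_cong)
  finally show ?thesis .
qed

lemma counit_R_op: "(\<Sum>y<N. eps y * R_op a b f y) = (\<Sum>x<N. f x * rho x a b)"
  unfolding sum_matvec by (rule sum.cong) (simp_all add: counit_Rcoef mult.commute)

lemma mult_one_left: "w < N \<Longrightarrow> mult one g w = g w"
proof -
  assume "w < N"
  have "mult one g w = (\<Sum>y<N. g y * (\<Sum>x<N. one x * mu x y w))"
    unfolding vec_mult_def by (simp only: sum_distrib_left sum_distrib_right, rule trans[OF sum.swap], simp add: mult_ac)
  also have "\<dots> = g w"
    using \<open>w < N\<close> by (simp add: unit_left if_distrib cong: if_cong)
  finally show ?thesis .
qed

lemma rho_vec_mult:
  assumes "a < d" "b < d"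
  shows "(\<Sum>z<N. mult f g z * rho z a b) = (\<Sum>c<d. (\<Sum>x<N. f x * rho x a c) * (\<Sum>y<N. g y * rho y c b))"
proof -
  have "(\<Sum>z<N. mult f g z * rho z a b) = (\<Sum>x<N. \<Sum>y<N. f x * g y * (\<Sum>z<N. mu x y z * rho z a b))"
    unfolding vec_mult_def by (simp only: sum_distrib_left sum_distrib_right, rule trans[OF sum_rotate], simp add: mult_ac)
  also have "\<dots> = (\<Sum>x<N. \<Sum>y<N. \<Sum>c<d. f x * g y * (rho x a c * rho y c b))"
    using assms by (simp add: rho_mult sum_distrib_left)
  also have "\<dots> = (\<Sum>c<d. (\<Sum>x<N. f x * rho x a c) * (\<Sum>y<N. g y * rho y c b))"
    unfolding sum_product by (rule trans[OF sum_rotate[symmetric]]) (simp add: mult_ac)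
  finally show ?thesis .
qed

lemma R_op_corep:
  assumes "i < dv" "j < dv" "y < N"
  shows "R_op a b (v i j) y = (\<Sum>k<dv. U a b k j * v i k y)"
proof -
  have "R_op a b (v i j) y = (\<Sum>z<N. rho z a b * (\<Sum>x<N. v i j x * cop x y z))"
    unfolding matvec_def Rcoef_def by (simp only: sum_distrib_left sum_distrib_right, rule trans[OF sum.swap], simp add: mult_ac)
  also have "\<dots> = (\<Sum>z<N. rho z a b * (\<Sum>k<dv. v i k y * v k j z))"
    using assms by (simp add: v_comult)
  also have "\<dots> = (\<Sum>k<dv. U a b k j * v i k y)"
    unfolding Ucoef_def by (simp only: sum_distrib_left sum_distrib_right, rule trans[OF sum.swap], simp add: mult_ac)
  finally show ?thesis .
qed

lemma Rcoef_mult: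
  assumes "x1 < N" "x2 < N" "y < N" "a < d" "b < d"
  shows "(\<Sum>k<N. mu x1 x2 k * Rcoef N cop rho y k a b) =
    (\<Sum>c<d. \<Sum>a1<N. \<Sum>a2<N. Rcoef N cop rho a1 x1 a c * Rcoef N cop rho a2 x2 c b * mu a1 a2 y)"
proof -
  have "(\<Sum>k<N. mu x1 x2 k * Rcoef N cop rho y k a b) = (\<Sum>z<N. rho z a b * (\<Sum>k<N. mu x1 x2 k * cop k y z))"
    unfolding Rcoef_def by (simp only: sum_distrib_left sum_distrib_right, rule trans[OF sum.swap], simp add: mult_ac)
  also have "\<dots> = (\<Sum>z<N. rho z a b * (\<Sum>a1<N. \<Sum>a2<N. \<Sum>b1<N. \<Sum>b2<N.
      cop x1 a1 b1 * cop x2 a2 b2 * mu a1 a2 y * mu b1 b2 z))"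
    using assms by (simp add: comult_mult)
  also have "\<dots> = (\<Sum>a1<N. \<Sum>a2<N. \<Sum>b1<N. \<Sum>b2<N.
      cop x1 a1 b1 * cop x2 a2 b2 * mu a1 a2 y * (\<Sum>z<N. mu b1 b2 z * rho z a b))"
    by (simp only: sum_distrib_left sum_distrib_right, (rule trans[OF sum.swap], rule sum.cong[OF refl])+, simp add: mult_ac)
  also have "\<dots> = (\<Sum>a1<N. \<Sum>a2<N. \<Sum>b1<N. \<Sum>b2<N.
      cop x1 a1 b1 * cop x2 a2 b2 * mu a1 a2 y * (\<Sum>c<d. rho b1 a c * rho b2 c b))"
    using assms by (simp add: rho_mult)
  also have "\<dots> = (\<Sum>c<d. \<Sum>a1<N. \<Sum>a2<N. Rcoef N cop rho a1 x1 a c * Rcoef N cop rho a2 x2 c b * mu a1 a2 y)"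
    unfolding Rcoef_def sum_product
    by (rule sym, simp only: sum_distrib_left sum_distrib_right, (rule trans[OF sum.swap], rule sum.cong[OF refl])+, simp add: mult_ac)
  finally show ?thesis .
qed

lemma R_op_mult:
  assumes "a < d" "b < d" "y < N"
  shows "R_op a b (mult f g) y = (\<Sum>c<d. mult (R_op a c f) (R_op c b g) y)"
proof -
  have "R_op a b (mult f g) y = (\<Sum>x1<N. \<Sum>x2<N. f x1 * g x2 * (\<Sum>k<N. mu x1 x2 k * Rcoef N cop rho y k a b))"
    unfolding matvec_def by (rule sum_vec_mult)
  also have "\<dots> = (\<Sum>x1<N. \<Sum>x2<N. f x1 * g x2 *
      (\<Sum>c<d. \<Sum>a1<N. \<Sum>a2<N. Rcoef N cop rho a1 x1 a c * Rcoef N cop rho a2 x2 c b * mu a1 a2 y))"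
    using assms by (simp add: Rcoef_mult)
  also have "\<dots> = (\<Sum>c<d. \<Sum>x1<N. \<Sum>x2<N. f x1 * g x2 *
      (\<Sum>a1<N. \<Sum>a2<N. Rcoef N cop rho a1 x1 a c * Rcoef N cop rho a2 x2 c b * mu a1 a2 y))"
    by (simp only: sum_distrib_left, rule trans[OF sum_rotate[symmetric]], simp add: mult_ac)
  also have "\<dots> = (\<Sum>c<d. mult (R_op a c f) (R_op c b g) y)"
    by (simp only: vec_mult_matvec)
  finally show ?thesis .
qed

lemma R_op_mult_corep:
  assumes "a < d" "b < d" "i < dv" "j < dv" "y < N"
  shows "R_op a b (mult f (v i j)) y = (\<Sum>c<d. \<Sum>k<dv. U c b k j * mult (R_op a c f) (v i k) y)"
proof -
  have "R_op a b (mult f (v i j)) y = (\<Sum>c<d. mult (R_op a c f) (R_op c b (v i j)) y)"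
    using assms by (simp add: R_op_mult)
  also have "\<dots> = (\<Sum>c<d. mult (R_op a c f) (\<lambda>z. \<Sum>k<dv. U c b k j * v i k z) y)"
    using assms by (simp add: R_op_corep cong: vec_mult_cong)
  also have "\<dots> = (\<Sum>c<d. \<Sum>k<dv. U c b k j * mult (R_op a c f) (v i k) y)"
    by (simp add: vec_mult_sum_right vec_mult_scale_right)
  finally show ?thesis .
qed

abbreviation chain :: "nat list \<Rightarrow> nat list \<Rightarrow> nat list \<Rightarrow> nat list \<Rightarrow> nat \<Rightarrow> complex" where
  "chain as is bs js \<equiv> chain_vec N (Rcoef N cop rho) (Vcoef N mu v) as is bs js one"

lemma chain_Cons: "chain (a # as) (i # is) (b # bs) (j # js) = R_op a b (mult (chain as is bs js) (v i j))"
  by simp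

lemma R_op_exchange_sum:
  assumes "\<And>x. x < N \<Longrightarrow>
      f x = (\<Sum>cs\<in>CS. \<Sum>ks\<in>KS. P cs ks * mult (chain as (tl is) cs (tl ks)) (v (hd is) (hd ks)) x)"
    and "is \<noteq> []" and "[] \<notin> KS"
  shows "R_op a c f y = (\<Sum>cs\<in>CS. \<Sum>ks\<in>KS. P cs ks * chain (a # as) is (c # cs) ks y)"
proof -
  have "R_op a c f =
      R_op a c (\<lambda>x. \<Sum>cs\<in>CS. \<Sum>ks\<in>KS. P cs ks * mult (chain as (tl is) cs (tl ks)) (v (hd is) (hd ks)) x)"
    using assms(1) by (rule matvec_cong)
  also have "\<dots> = (\<lambda>y. \<Sum>cs\<in>CS. \<Sum>ks\<in>KS.
      P cs ks * R_op a c (mult (chain as (tl is) cs (tl ks)) (v (hd is) (hd ks))) y)"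
    by (simp add: matvec_sum matvec_scale)
  also have "\<dots> = (\<lambda>y. \<Sum>cs\<in>CS. \<Sum>ks\<in>KS. P cs ks * chain (a # as) is (c # cs) ks y)"
    using assms(2,3) by (intro ext sum.cong refl) (metis chain_Cons list.collapse)
  finally show ?thesis by simp
qed

lemma chain_exchange:
  assumes "length as = Suc n" "length is = Suc n" "length bs = Suc n" "length js = Suc n"
    and "set as \<subseteq> {..<d}" "set is \<subseteq> {..<dv}" "set bs \<subseteq> {..<d}" "set js \<subseteq> {..<dv}"
    and "y < N"
  shows "chain as is bs js y = (\<Sum>cs\<in>idx_lists n d. \<Sum>ks\<in>idx_lists (Suc n) dv.
      gate_row U as bs js cs ks * mult (chain (butlast as) (tl is) cs (tl ks)) (v (hd is) (hd ks)) y)"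
  using assms
proof (induction n arbitrary: as "is" bs js y)
  case 0
  then obtain a i b j where single: "as = [a]" "is = [i]" "bs = [b]" "js = [j]"
    by (auto simp: length_Suc_conv)
  have "chain as is bs js y = R_op a b (v i j) y"
    using single by (simp add: chain_Cons mult_one_left cong: matvec_cong)
  also have "\<dots> = (\<Sum>k<dv. U a b k j * v i k y)"
    using 0 single by (simp add: R_op_corep)
  finally show ?case
    using 0 single by (simp add: idx_lists_0 sum_idx_lists_Suc gate_row_def mult_one_left)
next
  case (Suc n)
  then obtain a as' i is' b bs' j js'
    where cons: "as = a # as'" "is = i # is'" "bs = b # bs'" "js = j # js'"
    by (auto simp: length_Suc_conv)
  have bounds: "a < d" "i < dv" "b < d" "j < dv"
    using Suc.prems cons by auto
  have nonempty: "as' \<noteq> []" "is' \<noteq> []"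
    using Suc.prems cons by auto
  have exchange: "R_op a c (chain as' is' bs' js') z = (\<Sum>cs\<in>idx_lists n d. \<Sum>ks\<in>idx_lists (Suc n) dv.
      gate_row U as' bs' js' cs ks * chain (a # butlast as') is' (c # cs) ks z)" for c z
    using Suc.prems cons by (intro R_op_exchange_sum Suc.IH) (auto dest: idx_listsD)
  have "chain as is bs js y = R_op a b (mult (chain as' is' bs' js') (v i j)) y"
    by (simp add: cons)
  also have "\<dots> = (\<Sum>c<d. \<Sum>k<dv. U c b k j * mult (R_op a c (chain as' is' bs' js')) (v i k) y)"
    using bounds Suc.prems by (simp add: R_op_mult_corep)
  also have "\<dots> = (\<Sum>c<d. \<Sum>k<dv. U c b k j * mult (\<lambda>z. \<Sum>cs\<in>idx_lists n d. \<Sum>ks\<in>idx_lists (Suc n) dv.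
      gate_row U as' bs' js' cs ks * chain (a # butlast as') is' (c # cs) ks z) (v i k) y)"
    using exchange by (simp cong: vec_mult_cong)
  also have "\<dots> = (\<Sum>c<d. \<Sum>cs\<in>idx_lists n d. \<Sum>k<dv. \<Sum>ks\<in>idx_lists (Suc n) dv.
      U c b k j * (gate_row U as' bs' js' cs ks * mult (chain (a # butlast as') is' (c # cs) ks) (v i k) y))"
    by (simp add: vec_mult_sum_left vec_mult_scale_left sum_distrib_left sum.swap[of _ "{..<dv}"])
  also have "\<dots> = (\<Sum>cs\<in>idx_lists (Suc n) d. \<Sum>ks\<in>idx_lists (Suc (Suc n)) dv.
      gate_row U as bs js cs ks * mult (chain (butlast as) (tl is) cs (tl ks)) (v (hd is) (hd ks)) y)"
    using nonempty by (simp add: cons sum_idx_lists_Suc gate_row_Cons mult.assoc)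
  finally show ?case .
qed

lemma R_op_chain:
  assumes "length as = Suc n" "length is = Suc n" "length bs = Suc n" "length js = Suc n"
    and "set as \<subseteq> {..<d}" "set is \<subseteq> {..<dv}" "set bs \<subseteq> {..<d}" "set js \<subseteq> {..<dv}"
  shows "R_op a c (chain as is bs js) x = (\<Sum>cs\<in>idx_lists n d. \<Sum>ks\<in>idx_lists (Suc n) dv.
      gate_row U as bs js cs ks * chain (a # butlast as) is (c # cs) ks x)"
  using assms by (intro R_op_exchange_sum chain_exchange) (auto dest: idx_listsD)

lemma counit_chain_Cons:
  assumes "a < d" "b < d"
  shows "(\<Sum>x<N. eps x * chain (a # as) (i # is) (b # bs) (j # js) x) =
    (\<Sum>c<d. (\<Sum>x<N. chain as is bs js x * rho x a c) * U c b i j)"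
  using assms by (simp add: chain_Cons counit_R_op rho_vec_mult Ucoef_def)

lemma Tn_Suc_Suc:
  "length bs = Suc (Suc n) \<Longrightarrow> Tn U d dv (Suc (Suc n)) as is bs js =
   (\<Sum>cs\<in>idx_lists (Suc n) d. \<Sum>ks\<in>idx_lists (Suc n) dv.
      Tn U d dv (Suc n) (butlast as) (tl is) cs ks * gate_row U as bs js cs (hd is # ks))"
  by (simp add: gate_row_def)

lemma counit_chain:
  assumes "length as = Suc n" "length is = Suc n" "length bs = Suc n" "length js = Suc n"
    and "set as \<subseteq> {..<d}" "set is \<subseteq> {..<dv}" "set bs \<subseteq> {..<d}" "set js \<subseteq> {..<dv}"
  shows "(\<Sum>x<N. eps x * chain as is bs js x) = Tn U d dv (Suc n) as is bs js"
  using assms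
proof (induction n arbitrary: as "is" bs js)
  case 0
  then obtain a i b j where single: "as = [a]" "is = [i]" "bs = [b]" "js = [j]"
    by (auto simp: length_Suc_conv)
  have bounds: "a < d" "b < d"
    using 0 single by auto
  have "(\<Sum>x<N. eps x * chain as is bs js x) = (\<Sum>c<d. (\<Sum>x<N. one x * rho x a c) * U c b i j)"
    unfolding single counit_chain_Cons[OF bounds] by (simp add: mult.commute)
  also have "\<dots> = (\<Sum>c<d. if a = c then U c b i j else 0)"
    using bounds by (intro sum.cong) (simp_all add: rho_one)
  also have "\<dots> = U a b i j"
    using bounds by simp
  finally show ?case
    using single by simp
next
  case (Suc n)
  then obtain a as' i is' b bs' j js'
    where cons: "as = a # as'" "is = i # is'" "bs = b # bs'" "js = j # js'"
    by (auto simp: length_Suc_conv)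
  have nonempty: "as' \<noteq> []" "is' \<noteq> []"
    using Suc.prems cons by auto
  have "(\<Sum>x<N. chain as' is' bs' js' x * rho x a c) = (\<Sum>cs\<in>idx_lists n d. \<Sum>ks\<in>idx_lists (Suc n) dv.
      gate_row U as' bs' js' cs ks * Tn U d dv (Suc n) (a # butlast as') is' (c # cs) ks)"
    if "c < d" for c
  proof -
    have "(\<Sum>x<N. chain as' is' bs' js' x * rho x a c) = (\<Sum>x<N. eps x * R_op a c (chain as' is' bs' js') x)"
      by (simp add: counit_R_op)
    also have "\<dots> = (\<Sum>x<N. eps x * (\<Sum>cs\<in>idx_lists n d. \<Sum>ks\<in>idx_lists (Suc n) dv.
        gate_row U as' bs' js' cs ks * chain (a # butlast as') is' (c # cs) ks x))"
      using Suc.prems cons by (intro sum.cong refl arg_cong2[where f = "(*)"] R_op_chain) auto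
    also have "\<dots> = (\<Sum>cs\<in>idx_lists n d. \<Sum>ks\<in>idx_lists (Suc n) dv.
        gate_row U as' bs' js' cs ks * (\<Sum>x<N. eps x * chain (a # butlast as') is' (c # cs) ks x))"
      by (simp only: sum_distrib_left, rule trans[OF sum.swap], rule sum.cong[OF refl],
          rule trans[OF sum.swap], simp add: mult_ac)
    also have "\<dots> = (\<Sum>cs\<in>idx_lists n d. \<Sum>ks\<in>idx_lists (Suc n) dv.
        gate_row U as' bs' js' cs ks * Tn U d dv (Suc n) (a # butlast as') is' (c # cs) ks)"
      using Suc.prems cons nonempty \<open>c < d\<close>
      by (intro sum.cong refl arg_cong2[where f = "(*)"] Suc.IH)
        (auto dest!: idx_listsD in_set_butlastD)
    finally show ?thesis .
  qed
  then have "(\<Sum>x<N. eps x * chain as is bs js x) = (\<Sum>c<d. (\<Sum>cs\<in>idx_lists n d. \<Sum>ks\<in>idx_lists (Suc n) dv.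
      gate_row U as' bs' js' cs ks * Tn U d dv (Suc n) (a # butlast as') is' (c # cs) ks) * U c b i j)"
    using Suc.prems unfolding cons by (subst counit_chain_Cons) auto
  also have "\<dots> = Tn U d dv (Suc (Suc n)) as is bs js"
    using Suc.prems cons nonempty
    by (subst Tn_Suc_Suc)
      (simp_all add: sum_idx_lists_Suc[of _ n d] gate_row_Cons sum_distrib_left sum_distrib_right mult_ac
        del: Tn.simps)
  finally show ?case .
qed

end

theorem mainTheorem3:
  fixes N d dv n :: nat
    and mu cop :: "nat \<Rightarrow> nat \<Rightarrow> nat \<Rightarrow> complex"
    and one eps :: "nat \<Rightarrow> complex"
    and rho v :: "nat \<Rightarrow> nat \<Rightarrow> nat \<Rightarrow> complex"
    and as "is" bs js :: "nat list"
  assumes "prebialgebra N mu one cop eps"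
    and "representation N mu one d rho"
    and "corepresentation N cop eps dv v"
    and "n \<ge> 1"
    and "length as = n" and "length is = n" and "length bs = n" and "length js = n"
    and "set as \<subseteq> {..<d}" and "set bs \<subseteq> {..<d}"
    and "set is \<subseteq> {..<dv}" and "set js \<subseteq> {..<dv}"
  shows "Mn N (Rcoef N cop rho) (Vcoef N mu v) eps one n as is bs js
         = Tn (Ucoef N rho v) d dv n as is bs js"
proof -
  interpret prebialgebra_rep_corep N d dv mu cop one eps rho v
    using assms(1-3) by unfold_locales
  obtain m where n: "n = Suc m"
    using assms(4) by (cases n) auto
  have "Mn N (Rcoef N cop rho) (Vcoef N mu v) eps one n as is bs js =
      (\<Sum>x<N. eps x * chain as is bs js x)"
    using assms(5-8) by (rule Mn_eq_chain_vec)
  also have "\<dots> = Tn (Ucoef N rho v) d dv n as is bs js"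
    using assms(5-12) unfolding n by (intro counit_chain) auto
  finally show ?thesis .
qed

end
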